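(* Let $\lambda$ be an infinite cardinal and let $G$ be a graph on vertex set $\lambda^+$ with chromatic number $\lambda^+$. Then there is a function $f:\lambda^+\to\lambda^+$ such that for every closed unbounded set $C\subseteq\lambda^+$, the subgraph of $G$ induced on $\bigcup\{[\alpha,f(\alpha)]:\alpha\in C\}$ has chromatic number $\lambda^+$.
   Context: $[\alpha,\beta]$ denotes the interval of ordinals $\{\gamma:\alpha\le\gamma\le\beta\}$ (empty if $\beta<\alpha$). *)

theory Defs
  imports Main
begin

text \<open>Ordinals are represented by well-order relations r; the ordinal ordering
  is membership in r (reflexive on Field r).\<close>

definition proper_coloring :: "'v set \<Rightarrow> ('v \<Rightarrow> 'v \<Rightarrow> bool) \<Rightarrow> ('v \<Rightarrow> 'c) \<Rightarrow> bool" where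
  "proper_coloring S E c \<longleftrightarrow> (\<forall>x\<in>S. \<forall>y\<in>S. E x y \<longrightarrow> c x \<noteq> c y)"

text \<open>Colours are taken in the vertex type, which loses no generality since a
  colouring of S uses at most |S| colours.\<close>
definition has_chromatic_number :: "'v set \<Rightarrow> ('v \<Rightarrow> 'v \<Rightarrow> bool) \<Rightarrow> 'k rel \<Rightarrow> bool" where
  "has_chromatic_number S E \<kappa> \<longleftrightarrow>
     (\<exists>c::'v \<Rightarrow> 'v. proper_coloring S E c \<and> (card_of (c ` S), \<kappa>) \<in> ordIso) \<and>
     (\<forall>c::'v \<Rightarrow> 'v. proper_coloring S E c \<longrightarrow> (\<kappa>, card_of (c ` S)) \<in> ordLeq)"

definition unbounded_in :: "'a rel \<Rightarrow> 'a set \<Rightarrow> bool" where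
  "unbounded_in r C \<longleftrightarrow> (\<forall>\<alpha>\<in>Field r. \<exists>\<beta>\<in>C. (\<alpha>, \<beta>) \<in> r)"

definition is_lub :: "'a rel \<Rightarrow> 'a set \<Rightarrow> 'a \<Rightarrow> bool" where
  "is_lub r A \<gamma> \<longleftrightarrow> \<gamma> \<in> Field r \<and> (\<forall>a\<in>A. (a, \<gamma>) \<in> r) \<and>
     (\<forall>\<beta>\<in>Field r. (\<forall>a\<in>A. (a, \<beta>) \<in> r) \<longrightarrow> (\<gamma>, \<beta>) \<in> r)"

definition closed_in :: "'a rel \<Rightarrow> 'a set \<Rightarrow> bool" where
  "closed_in r C \<longleftrightarrow> (\<forall>A \<subseteq> C. A \<noteq> {} \<longrightarrow> (\<forall>\<gamma>. is_lub r A \<gamma> \<longrightarrow> \<gamma> \<in> C))"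

definition club :: "'a rel \<Rightarrow> 'a set \<Rightarrow> bool" where
  "club r C \<longleftrightarrow> C \<subseteq> Field r \<and> closed_in r C \<and> unbounded_in r C"

definition ord_interval :: "'a rel \<Rightarrow> 'a \<Rightarrow> 'a \<Rightarrow> 'a set" where
  "ord_interval r \<alpha> \<beta> = {\<gamma> \<in> Field r. (\<alpha>, \<gamma>) \<in> r \<and> (\<gamma>, \<beta>) \<in> r}"

end

(*
  Suppose no f works: every f mapping lambda^+ to itself has a club C_f such that the union of
  the intervals [alpha, f alpha], alpha in C_f, induces a subgraph of chromatic number at most
  lambda. Diagonalise: D_0 = lambda^+ and D_(n+1) = D_n Int C_(f_n), where f_n alpha is the least
  element of D_n above alpha. As lambda^+ is regular and uncountable, D = INT n. D_n is club; fix
  d0 in D. For v >= d0 let alpha be the supremum of D below v. Then alpha is in D, and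
  v <= f_n alpha for some n, since otherwise sup_n f_n alpha would be an element of D in
  (alpha, v]. So lambda^+ is covered by the initial segment below d0 and countably many
  lambda-colourable sets, hence is itself lambda-colourable, contradicting chi(G) = lambda^+.
*)
theory Submission
  imports Defs "HOL-Library.Nat_Bijection"
begin

unbundle cardinal_syntax

lemma closed_inD: "closed_in r C \<Longrightarrow> A \<subseteq> C \<Longrightarrow> A \<noteq> {} \<Longrightarrow> is_lub r A \<gamma> \<Longrightarrow> \<gamma> \<in> C"
  unfolding closed_in_def by blast

context wo_rel
begin

lemma leq_refl: "a \<in> Field r \<Longrightarrow> (a, a) \<in> r"
  using REFL by (rule refl_onD)

lemma leq_trans: "(a, b) \<in> r \<Longrightarrow> (b, c) \<in> r \<Longrightarrow> (a, c) \<in> r"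
  using TRANS by (rule transD)

lemma leq_antisym: "(a, b) \<in> r \<Longrightarrow> (b, a) \<in> r \<Longrightarrow> a = b"
  using ANTISYM by (rule antisymD)

lemma leq_total: "a \<in> Field r \<Longrightarrow> b \<in> Field r \<Longrightarrow> (a, b) \<in> r \<or> (b, a) \<in> r"
  using TOTALS by blast

lemma is_lub_exists:
  assumes "A \<subseteq> Field r" and "b \<in> Field r" and "\<forall>a\<in>A. (a, b) \<in> r"
  shows "\<exists>\<gamma>. is_lub r A \<gamma>"
proof -
  let ?U = "{\<beta>\<in>Field r. \<forall>a\<in>A. (a, \<beta>) \<in> r}"
  have "?U \<subseteq> Field r" and "?U \<noteq> {}" using assms by auto
  then have "minim ?U \<in> ?U" and "\<forall>\<beta>\<in>?U. (minim ?U, \<beta>) \<in> r"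
    using minim_in minim_least by blast+
  then show ?thesis unfolding is_lub_def by blast
qed

lemma is_lub_cofinal_subset:
  assumes lub: "is_lub r S \<gamma>" and "T \<subseteq> S" and cofinal: "\<forall>a\<in>S. \<exists>t\<in>T. (a, t) \<in> r"
  shows "is_lub r T \<gamma>"
proof -
  have "(\<gamma>, \<beta>) \<in> r" if "\<beta> \<in> Field r" and bound: "\<forall>t\<in>T. (t, \<beta>) \<in> r" for \<beta>
  proof -
    have "\<forall>a\<in>S. (a, \<beta>) \<in> r" using cofinal bound leq_trans by blast
    then show ?thesis using lub \<open>\<beta> \<in> Field r\<close> unfolding is_lub_def by blast
  qed
  then show ?thesis using lub \<open>T \<subseteq> S\<close> unfolding is_lub_def by blast
qed

lemma chain_leq:
  assumes chain: "\<forall>m. (s m, s (Suc m)) \<in> r" and "s m \<in> Field r" and "m \<le> n"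
  shows "(s m, s n) \<in> r"
  using \<open>m \<le> n\<close>
proof (induction n rule: dec_induct)
  case base
  show ?case using leq_refl \<open>s m \<in> Field r\<close> .
next
  case (step k)
  then show ?case using chain leq_trans by blast
qed

lemma closed_in_lub_chain:
  assumes "closed_in r K" and chain: "\<forall>m. (s m, s (Suc m)) \<in> r" and "range s \<subseteq> Field r"
    and lub: "is_lub r (range s) \<gamma>" and frequently: "\<forall>m. \<exists>k\<ge>m. s k \<in> K"
  shows "\<gamma> \<in> K"
proof -
  let ?T = "s ` {k. s k \<in> K}"
  have "\<exists>t\<in>?T. (s m, t) \<in> r" for m
  proof -
    obtain k where "k \<ge> m" and "s k \<in> K" using frequently by blast
    then show ?thesis using chain_leq[OF chain] \<open>range s \<subseteq> Field r\<close> by blast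
  qed
  then have "\<forall>a\<in>range s. \<exists>t\<in>?T. (a, t) \<in> r" by blast
  then have "is_lub r ?T \<gamma>" using is_lub_cofinal_subset[OF lub] by blast
  moreover have "?T \<subseteq> K" and "?T \<noteq> {}" using frequently by auto
  ultimately show ?thesis using \<open>closed_in r K\<close> unfolding closed_in_def by blast
qed

lemma club_Field: "club r (Field r)"
  unfolding club_def closed_in_def unbounded_in_def is_lub_def using leq_refl by blast

end

locale uncountable_cofinality = wo_rel r for r :: "'a rel" +
  assumes Field_nonempty: "Field r \<noteq> {}"
    and no_greatest: "a \<in> Field r \<Longrightarrow> \<exists>b\<in>Field r. a \<noteq> b \<and> (a, b) \<in> r"
    and countable_bounded: "range (s :: nat \<Rightarrow> 'a) \<subseteq> Field r \<Longrightarrow> \<exists>b\<in>Field r. \<forall>n. (s n, b) \<in> r"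

definition next_in :: "'a rel \<Rightarrow> 'a set \<Rightarrow> 'a \<Rightarrow> 'a" where
  "next_in r D \<alpha> = wo_rel.minim r {\<beta>\<in>D. \<alpha> \<noteq> \<beta> \<and> (\<alpha>, \<beta>) \<in> r}"

context uncountable_cofinality
begin

lemma sequence_has_lub:
  fixes s :: "nat \<Rightarrow> 'a"
  assumes "range s \<subseteq> Field r"
  shows "\<exists>\<gamma>. is_lub r (range s) \<gamma>"
proof -
  obtain b where "b \<in> Field r" and "\<forall>n. (s n, b) \<in> r"
    using countable_bounded[OF assms] by blast
  then show ?thesis using is_lub_exists[OF assms] by blast
qed

lemma club_INT:
  assumes clubs: "\<And>n::nat. club r (K n)"
  shows "club r (\<Inter>n. K n)"
proof -
  have closed: "closed_in r (\<Inter>n. K n)"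
    unfolding closed_in_def
  proof (intro allI impI INT_I)
    fix A \<gamma> n
    assume "A \<subseteq> (\<Inter>n. K n)" and "A \<noteq> {}" and "is_lub r A \<gamma>"
    moreover have "closed_in r (K n)" using clubs unfolding club_def by blast
    ultimately show "\<gamma> \<in> K n" unfolding closed_in_def by blast
  qed
  have "\<exists>\<gamma>\<in>\<Inter>n. K n. (\<alpha>, \<gamma>) \<in> r" if "\<alpha> \<in> Field r" for \<alpha>
  proof -
    \<comment> \<open>every index occurs as a tag infinitely often, so the chain below meets each K n cofinally\<close>
    define tag where "tag m = fst (prod_decode m)" for m
    have "\<exists>s. \<forall>m. (s m \<in> Field r \<and> (m = 0 \<longrightarrow> s m = \<alpha>)) \<and>
        (s (Suc m) \<in> K (tag m) \<and> (s m, s (Suc m)) \<in> r)"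
    proof (rule dependent_nat_choice)
      fix x and m :: nat
      assume "x \<in> Field r \<and> (m = 0 \<longrightarrow> x = \<alpha>)"
      then obtain y where "y \<in> K (tag m)" and "(x, y) \<in> r"
        using clubs unfolding club_def unbounded_in_def by blast
      then show "\<exists>y. (y \<in> Field r \<and> (Suc m = 0 \<longrightarrow> y = \<alpha>)) \<and> y \<in> K (tag m) \<and> (x, y) \<in> r"
        using clubs unfolding club_def by blast
    qed (use \<open>\<alpha> \<in> Field r\<close> in blast)
    then obtain s where s: "\<And>m. s m \<in> Field r" "s 0 = \<alpha>"
      and step: "\<And>m. s (Suc m) \<in> K (tag m) \<and> (s m, s (Suc m)) \<in> r"
      by blast
    have chain: "\<forall>m. (s m, s (Suc m)) \<in> r" and "range s \<subseteq> Field r"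
      using step s(1) by auto
    obtain \<gamma> where lub: "is_lub r (range s) \<gamma>"
      using sequence_has_lub[OF \<open>range s \<subseteq> Field r\<close>] by blast
    have "\<gamma> \<in> K n" for n
    proof -
      have "\<exists>k\<ge>m. s k \<in> K n" for m
      proof -
        have "tag (prod_encode (n, m)) = n" and "m \<le> Suc (prod_encode (n, m))"
          unfolding tag_def by (simp_all add: le_prod_encode_2 le_SucI)
        then show ?thesis using step by metis
      qed
      moreover have "closed_in r (K n)" using clubs unfolding club_def by blast
      ultimately show ?thesis
        using closed_in_lub_chain chain \<open>range s \<subseteq> Field r\<close> lub by blast
    qed
    moreover have "(\<alpha>, \<gamma>) \<in> r" using lub s(2) unfolding is_lub_def by blast
    ultimately show ?thesis by blast
  qed
  moreover have "(\<Inter>n. K n) \<subseteq> Field r" using clubs[of 0] unfolding club_def by blast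
  ultimately show ?thesis
    using closed unfolding club_def unbounded_in_def by blast
qed

lemma club_Int:
  assumes "club r A" and "club r B"
  shows "club r (A \<inter> B)"
proof -
  have "(\<Inter>n::nat. if n = 0 then A else B) = A \<inter> B"
  proof (intro equalityI subsetI)
    fix x assume "x \<in> (\<Inter>n::nat. if n = 0 then A else B)"
    then have "x \<in> (if (0::nat) = 0 then A else B)" and "x \<in> (if (1::nat) = 0 then A else B)"
      by blast+
    then show "x \<in> A \<inter> B" by simp
  qed simp
  then show ?thesis using club_INT[of "\<lambda>n. if n = 0 then A else B"] assms by simp
qed

lemma next_in_greater:
  assumes "club r D" and "\<alpha> \<in> Field r"
  shows "next_in r D \<alpha> \<in> D" and "\<alpha> \<noteq> next_in r D \<alpha>" and "(\<alpha>, next_in r D \<alpha>) \<in> r"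
proof -
  let ?U = "{\<beta>\<in>D. \<alpha> \<noteq> \<beta> \<and> (\<alpha>, \<beta>) \<in> r}"
  obtain a where a: "a \<in> Field r" "\<alpha> \<noteq> a" "(\<alpha>, a) \<in> r"
    using no_greatest \<open>\<alpha> \<in> Field r\<close> by blast
  then obtain b where b: "b \<in> D" "(a, b) \<in> r"
    using \<open>club r D\<close> unfolding club_def unbounded_in_def by blast
  then have "b \<in> ?U" using a leq_trans leq_antisym by blast
  moreover have "?U \<subseteq> Field r" using \<open>club r D\<close> unfolding club_def by blast
  ultimately have "minim ?U \<in> ?U" using minim_in by blast
  then show "next_in r D \<alpha> \<in> D" and "\<alpha> \<noteq> next_in r D \<alpha>" and "(\<alpha>, next_in r D \<alpha>) \<in> r"
    unfolding next_in_def by auto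
qed

lemma next_in_least:
  assumes "D \<subseteq> Field r" and "\<beta> \<in> D" and "\<alpha> \<noteq> \<beta>" and "(\<alpha>, \<beta>) \<in> r"
  shows "(next_in r D \<alpha>, \<beta>) \<in> r"
  using assms minim_least[of "{\<beta>\<in>D. \<alpha> \<noteq> \<beta> \<and> (\<alpha>, \<beta>) \<in> r}"] unfolding next_in_def by blast

lemma ex_next_in_above:
  fixes D :: "nat \<Rightarrow> 'a set"
  assumes clubs: "\<And>n. club r (D n)" and "antimono D"
    and "\<alpha> \<in> (\<Inter>n. D n)" and "v \<in> Field r"
    and gap: "\<And>d. d \<in> (\<Inter>n. D n) \<Longrightarrow> (d, v) \<in> r \<Longrightarrow> (d, \<alpha>) \<in> r"
  shows "\<exists>n. (v, next_in r (D n) \<alpha>) \<in> r"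
proof (rule ccontr)
  \<comment> \<open>otherwise the supremum of the \<beta> n below is an element of the intersection in (\<alpha>, v]\<close>
  assume "\<nexists>n. (v, next_in r (D n) \<alpha>) \<in> r"
  define \<beta> where "\<beta> n = next_in r (D n) \<alpha>" for n
  have D_Field: "D n \<subseteq> Field r" for n using clubs unfolding club_def by blast
  have "\<alpha> \<in> Field r" using \<open>\<alpha> \<in> (\<Inter>n. D n)\<close> D_Field by blast
  have \<beta>: "\<beta> n \<in> D n" "\<alpha> \<noteq> \<beta> n" "(\<alpha>, \<beta> n) \<in> r" for n
    unfolding \<beta>_def using next_in_greater[OF clubs \<open>\<alpha> \<in> Field r\<close>] by auto
  then have "range \<beta> \<subseteq> Field r" using D_Field by blast
  have chain: "\<forall>m. (\<beta> m, \<beta> (Suc m)) \<in> r"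
  proof
    fix m
    have "\<beta> (Suc m) \<in> D m" using \<beta>(1) \<open>antimono D\<close> unfolding antimono_iff_le_Suc by blast
    then show "(\<beta> m, \<beta> (Suc m)) \<in> r"
      using next_in_least[OF D_Field _ \<beta>(2,3)] by (simp add: \<beta>_def)
  qed
  obtain \<gamma> where \<gamma>: "is_lub r (range \<beta>) \<gamma>"
    using sequence_has_lub[OF \<open>range \<beta> \<subseteq> Field r\<close>] by blast
  have "\<gamma> \<in> D n" for n
  proof -
    have "\<exists>k\<ge>m. \<beta> k \<in> D n" for m
      using \<beta>(1)[of "max m n"] antimonoD[OF \<open>antimono D\<close>, of n "max m n"]
      by (intro exI[of _ "max m n"]) auto
    moreover have "closed_in r (D n)" using clubs unfolding club_def by blast
    ultimately show ?thesis
      using closed_in_lub_chain chain \<open>range \<beta> \<subseteq> Field r\<close> \<gamma> by blast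
  qed
  then have "\<gamma> \<in> (\<Inter>n. D n)" by blast
  have "(\<beta> n, v) \<in> r" for n
  proof -
    have "(v, \<beta> n) \<notin> r" using \<open>\<nexists>n. (v, next_in r (D n) \<alpha>) \<in> r\<close> unfolding \<beta>_def by blast
    moreover have "\<beta> n \<in> Field r" using \<open>range \<beta> \<subseteq> Field r\<close> by blast
    ultimately show ?thesis using leq_total[OF \<open>v \<in> Field r\<close>] by blast
  qed
  then have "(\<gamma>, v) \<in> r" using \<gamma> \<open>v \<in> Field r\<close> unfolding is_lub_def by blast
  with \<open>\<gamma> \<in> (\<Inter>n. D n)\<close> have "(\<gamma>, \<alpha>) \<in> r" by (rule gap)
  moreover have "(\<beta> 0, \<gamma>) \<in> r" using \<gamma> unfolding is_lub_def by blast
  ultimately have "(\<beta> 0, \<alpha>) \<in> r" by (rule leq_trans[rotated])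
  then show False using \<beta>(2,3) leq_antisym by metis
qed

lemma antimono_clubs_interval_cover:
  fixes D :: "nat \<Rightarrow> 'a set"
  assumes clubs: "\<And>n. club r (D n)" and "antimono D" and "d0 \<in> (\<Inter>n. D n)"
  shows "Field r \<subseteq> underS d0 \<union> (\<Union>n. \<Union>\<alpha>\<in>(\<Inter>n. D n). ord_interval r \<alpha> (next_in r (D n) \<alpha>))"
proof
  fix v assume "v \<in> Field r"
  let ?D = "\<Inter>n. D n"
  show "v \<in> underS d0 \<union> (\<Union>n. \<Union>\<alpha>\<in>?D. ord_interval r \<alpha> (next_in r (D n) \<alpha>))"
  proof (cases "(d0, v) \<in> r")
    case True
    let ?A = "{d\<in>?D. (d, v) \<in> r}"
    have "club r ?D" by (rule club_INT) (rule clubs)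
    then have "?A \<subseteq> Field r" and "closed_in r ?D" unfolding club_def by blast+
    then obtain \<alpha> where \<alpha>: "is_lub r ?A \<alpha>"
      using is_lub_exists[OF _ \<open>v \<in> Field r\<close>] by blast
    have "?A \<noteq> {}" using \<open>d0 \<in> ?D\<close> True by blast
    then have "\<alpha> \<in> ?D" using closed_inD[OF \<open>closed_in r ?D\<close> _ _ \<alpha>] by blast
    have "(\<alpha>, v) \<in> r" and gap: "\<And>d. d \<in> ?D \<Longrightarrow> (d, v) \<in> r \<Longrightarrow> (d, \<alpha>) \<in> r"
      using \<alpha> \<open>v \<in> Field r\<close> unfolding is_lub_def by auto
    obtain n where "(v, next_in r (D n) \<alpha>) \<in> r"
      using ex_next_in_above[OF clubs \<open>antimono D\<close> \<open>\<alpha> \<in> ?D\<close> \<open>v \<in> Field r\<close> gap] by blast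
    then have "v \<in> ord_interval r \<alpha> (next_in r (D n) \<alpha>)"
      unfolding ord_interval_def using \<open>(\<alpha>, v) \<in> r\<close> \<open>v \<in> Field r\<close> by blast
    then show ?thesis using \<open>\<alpha> \<in> ?D\<close> by blast
  next
    case False
    have "d0 \<in> Field r" using \<open>d0 \<in> ?D\<close> clubs[of 0] unfolding club_def by blast
    then have "v \<in> underS d0"
      using False leq_total[OF _ \<open>v \<in> Field r\<close>] unfolding underS_def by auto
    then show ?thesis by blast
  qed
qed

lemma club_diagonal_interval_cover:
  assumes "\<And>f. \<forall>\<alpha>\<in>Field r. f \<alpha> \<in> Field r \<Longrightarrow> \<exists>C. club r C \<and> P f C"
  obtains g :: "nat \<Rightarrow> 'a \<Rightarrow> 'a" and C :: "nat \<Rightarrow> 'a set" and d0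
  where "\<forall>n. P (g n) (C n)" and "d0 \<in> Field r"
    and "Field r \<subseteq> underS d0 \<union> (\<Union>n. \<Union>\<alpha>\<in>C n. ord_interval r \<alpha> (g n \<alpha>))"
proof -
  define Cf where "Cf f = (SOME C. club r C \<and> P f C)" for f
  have Cf: "club r (Cf f) \<and> P f (Cf f)" if "\<forall>\<alpha>\<in>Field r. f \<alpha> \<in> Field r" for f
    unfolding Cf_def using assms[OF that] by (rule someI_ex)
  define D where "D = rec_nat (Field r) (\<lambda>_ Dn. Dn \<inter> Cf (next_in r Dn))"
  define g where "g n = next_in r (D n)" for n
  have D_simps: "D 0 = Field r" "D (Suc n) = D n \<inter> Cf (g n)" for n
    unfolding D_def g_def by simp_all
  have g_Field: "\<forall>\<alpha>\<in>Field r. g n \<alpha> \<in> Field r" if "club r (D n)" for n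
  proof
    fix \<alpha> assume "\<alpha> \<in> Field r"
    then have "g n \<alpha> \<in> D n" unfolding g_def by (rule next_in_greater(1)[OF that])
    then show "g n \<alpha> \<in> Field r" using that unfolding club_def by blast
  qed
  have clubs: "club r (D n)" for n
  proof (induction n)
    case 0
    show ?case unfolding D_simps(1) by (rule club_Field)
  next
    case (Suc n)
    have "club r (Cf (g n))" using Cf g_Field[OF Suc.IH] by blast
    then show ?case unfolding D_simps(2) by (rule club_Int[OF Suc.IH])
  qed
  have "antimono D" unfolding antimono_iff_le_Suc D_simps by blast
  have "unbounded_in r (\<Inter>n. D n)" using club_INT[of D, OF clubs] unfolding club_def by blast
  moreover obtain e where "e \<in> Field r" using Field_nonempty by blast
  ultimately obtain d0 where "d0 \<in> (\<Inter>n. D n)" unfolding unbounded_in_def by blast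
  then have "Field r \<subseteq> underS d0 \<union> (\<Union>n. \<Union>\<alpha>\<in>(\<Inter>n. D n). ord_interval r \<alpha> (g n \<alpha>))"
    using antimono_clubs_interval_cover[of D, OF clubs \<open>antimono D\<close>, folded g_def] by blast
  also have "\<dots> \<subseteq> underS d0 \<union> (\<Union>n. \<Union>\<alpha>\<in>Cf (g n). ord_interval r \<alpha> (g n \<alpha>))"
    by (intro Un_mono UN_mono subset_refl) (use D_simps(2) in blast)
  finally have cover: "Field r \<subseteq> underS d0 \<union> (\<Union>n. \<Union>\<alpha>\<in>Cf (g n). ord_interval r \<alpha> (g n \<alpha>))" .
  have "\<forall>n. P (g n) (Cf (g n))" using Cf[OF g_Field[OF clubs]] by blast
  moreover have "d0 \<in> Field r" using \<open>d0 \<in> (\<Inter>n. D n)\<close> D_simps(1) by blast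
  ultimately show thesis using cover by (rule that)
qed

end

lemma card_of_nat_ordLeq_infinite:
  assumes "Card_order lam" and "\<not> finite (Field lam)"
  shows "|UNIV :: nat set| \<le>o lam"
proof -
  have "|UNIV :: nat set| \<le>o |Field lam|" using assms(2) infinite_iff_card_of_nat by blast
  then show ?thesis using card_of_Field_ordIso[OF assms(1)] by (rule ordLeq_ordIso_trans)
qed

lemma regularCard_countable_bounded:
  fixes s :: "nat \<Rightarrow> 'a"
  assumes "Card_order r" and "regularCard r" and "|UNIV :: nat set| <o r"
    and "range s \<subseteq> Field r"
  shows "\<exists>b\<in>Field r. \<forall>n. (s n, b) \<in> r"
proof -
  interpret wo_rel r using \<open>Card_order r\<close> by (rule Card_order_wo_rel)
  have "|range s| <o r"
    using card_of_image[of s UNIV] \<open>|UNIV :: nat set| <o r\<close> by (rule ordLeq_ordLess_trans)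
  then have "\<not> |range s| =o r" by (rule not_ordLess_ordIso)
  then have "\<not> cofinal (range s) r"
    using \<open>regularCard r\<close> \<open>range s \<subseteq> Field r\<close> unfolding regularCard_def by blast
  then obtain b where "b \<in> Field r" and b: "\<forall>n. b = s n \<or> (b, s n) \<notin> r"
    unfolding cofinal_def by blast
  have "(s n, b) \<in> r" for n
  proof -
    have "s n \<in> Field r" using \<open>range s \<subseteq> Field r\<close> by blast
    then show ?thesis
      using leq_total[OF _ \<open>b \<in> Field r\<close>] leq_refl[OF \<open>b \<in> Field r\<close>] b by metis
  qed
  then show ?thesis using \<open>b \<in> Field r\<close> by blast
qed

lemma uncountable_cofinality_cardSuc:
  assumes "Card_order lam" and "\<not> finite (Field lam)"
  shows "uncountable_cofinality (cardSuc lam)"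
proof -
  have "Cinfinite lam" using assms unfolding cinfinite_def by blast
  then have "Cinfinite (cardSuc lam)" by (rule Cinfinite_cardSuc)
  have "|UNIV :: nat set| <o cardSuc lam"
    using card_of_nat_ordLeq_infinite[OF assms] cardSuc_greater[OF assms(1)]
    by (rule ordLeq_ordLess_trans)
  show ?thesis
  proof (unfold_locales)
    show "Well_order (cardSuc lam)" using assms(1) by (rule cardSuc_Well_order)
    show "Field (cardSuc lam) \<noteq> {}" using assms(1) by (rule Field_cardSuc_not_empty)
    show "\<exists>b\<in>Field (cardSuc lam). a \<noteq> b \<and> (a, b) \<in> cardSuc lam"
      if "a \<in> Field (cardSuc lam)" for a
      using that \<open>Cinfinite (cardSuc lam)\<close> by (rule Cinfinite_limit)
    show "\<exists>b\<in>Field (cardSuc lam). \<forall>n. (s n, b) \<in> cardSuc lam"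
      if "range s \<subseteq> Field (cardSuc lam)" for s :: "nat \<Rightarrow> 'a set"
      using cardSuc_Card_order[OF assms(1)] regularCard_cardSuc[OF \<open>Cinfinite lam\<close>]
        \<open>|UNIV :: nat set| <o cardSuc lam\<close> that
      by (rule regularCard_countable_bounded)
  qed
qed

lemma has_chromatic_number_ordLeq_colours:
  assumes "has_chromatic_number S E \<kappa>" and "proper_coloring S E c"
  shows "\<kappa> \<le>o |c ` S|"
proof -
  \<comment> \<open>has_chromatic_number only speaks of colourings into the vertex type, so transport c there\<close>
  obtain h where h: "inj_on h (c ` S)" "h ` c ` S \<subseteq> S"
    using card_of_image[of c S] unfolding card_of_ordLeq[symmetric] by blast
  have "proper_coloring S E (h \<circ> c)"
    using \<open>proper_coloring S E c\<close> h(1) unfolding proper_coloring_def inj_on_def by auto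
  then have "\<kappa> \<le>o |(h \<circ> c) ` S|"
    using \<open>has_chromatic_number S E \<kappa>\<close> unfolding has_chromatic_number_def by blast
  moreover have "|(h \<circ> c) ` S| \<le>o |c ` S|"
    unfolding image_comp[symmetric] by (rule card_of_image)
  ultimately show ?thesis by (rule ordLeq_transitive)
qed

lemma not_has_chromatic_number_imp_fewer_colours:
  assumes "Card_order \<kappa>" and "|S| \<le>o \<kappa>" and "\<forall>x\<in>S. \<not> E x x"
    and "\<not> has_chromatic_number S E \<kappa>"
  shows "\<exists>c :: 'v \<Rightarrow> 'v. proper_coloring S E c \<and> |c ` S| <o \<kappa>"
proof (rule ccontr)
  assume "\<not> ?thesis"
  then have many: "\<kappa> \<le>o |c ` S|" if "proper_coloring S E c" for c :: "'v \<Rightarrow> 'v"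
    using that not_ordLeq_iff_ordLess[OF card_of_Well_order card_order_on_well_order_on[OF assms(1)]]
    by blast
  have "proper_coloring S E id" using assms(3) unfolding proper_coloring_def by auto
  moreover have "|id ` S| =o \<kappa>"
    using many[OF \<open>proper_coloring S E id\<close>] assms(2) by (simp add: ordIso_iff_ordLeq)
  ultimately have "has_chromatic_number S E \<kappa>"
    using many unfolding has_chromatic_number_def by blast
  with assms(4) show False ..
qed

lemma not_has_chromatic_number_cardSuc:
  fixes lam :: "'a rel" and S :: "'a set set"
  assumes "Card_order lam" and "S \<subseteq> Field (cardSuc lam)" and "\<forall>x\<in>S. \<not> E x x"
    and "\<not> has_chromatic_number S E (cardSuc lam)"
  shows "\<exists>c :: 'a set \<Rightarrow> 'a set. proper_coloring S E c \<and> |c ` S| \<le>o lam"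
proof -
  have "Card_order (cardSuc lam)" using assms(1) by (rule cardSuc_Card_order)
  have "|S| \<le>o cardSuc lam"
    using card_of_mono1[OF assms(2)] card_of_Field_ordIso[OF \<open>Card_order (cardSuc lam)\<close>]
    by (rule ordLeq_ordIso_trans)
  then obtain c :: "'a set \<Rightarrow> 'a set" where "proper_coloring S E c" and "|c ` S| <o cardSuc lam"
    using not_has_chromatic_number_imp_fewer_colours[OF \<open>Card_order (cardSuc lam)\<close> _ assms(3,4)]
    by blast
  then show ?thesis
    using cardSuc_ordLeq_ordLess[OF assms(1) card_of_Card_order] by blast
qed

lemma proper_coloring_countable_cover:
  fixes X :: "nat \<Rightarrow> 'v set" and lam :: "'b rel"
  assumes "Card_order lam" and "\<not> finite (Field lam)" and "S \<subseteq> (\<Union>n. X n)"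
    and "\<And>n. \<exists>c :: 'v \<Rightarrow> 'c. proper_coloring (X n) E c \<and> |c ` X n| \<le>o lam"
  shows "\<exists>c :: 'v \<Rightarrow> nat \<times> 'c. proper_coloring S E c \<and> |c ` S| \<le>o lam"
proof -
  obtain cs :: "nat \<Rightarrow> 'v \<Rightarrow> 'c"
    where cs: "\<And>n. proper_coloring (X n) E (cs n)" "\<And>n. |cs n ` X n| \<le>o lam"
    using assms(4) by metis
  define level where "level v = (LEAST n. v \<in> X n)" for v
  define c where "c v = (level v, cs (level v) v)" for v
  have level: "v \<in> X (level v)" if v: "v \<in> S" for v
  proof -
    obtain n where "v \<in> X n" using v \<open>S \<subseteq> (\<Union>n. X n)\<close> by blast
    then show ?thesis unfolding level_def by (rule LeastI)
  qed
  have "proper_coloring S E c"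
    unfolding proper_coloring_def
  proof (intro ballI impI notI)
    fix x y assume x: "x \<in> S" and y: "y \<in> S" and "E x y" "c x = c y"
    then have "level y = level x" and same: "cs (level x) x = cs (level x) y"
      unfolding c_def by (metis prod.inject)+
    then have "x \<in> X (level x)" and "y \<in> X (level x)" using level[OF x] level[OF y] by simp_all
    then have "cs (level x) x \<noteq> cs (level x) y"
      using cs(1)[of "level x"] \<open>E x y\<close> unfolding proper_coloring_def by blast
    then show False using same by contradiction
  qed
  moreover have "|c ` S| \<le>o lam"
  proof -
    have "c ` S \<subseteq> (SIGMA n:UNIV. cs n ` X n)"
    proof (rule image_subsetI)
      fix v assume "v \<in> S"
      then show "c v \<in> (SIGMA n:UNIV. cs n ` X n)" unfolding c_def using level by blast
    qed
    moreover have "|SIGMA n:UNIV. cs n ` X n| \<le>o lam"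
      using assms(2,1) card_of_nat_ordLeq_infinite[OF assms(1,2)]
      by (rule card_of_Sigma_ordLeq_infinite_Field) (use cs(2) in blast)
    ultimately show ?thesis using ordLeq_transitive[OF card_of_mono1] by blast
  qed
  ultimately show ?thesis by blast
qed

lemma not_has_chromatic_number_cardSuc_cover:
  fixes lam :: "'a rel" and X :: "nat \<Rightarrow> 'a set set"
  assumes "Card_order lam" and "\<not> finite (Field lam)" and irrefl: "\<forall>x. \<not> E x x"
    and "|A| \<le>o lam" and "\<And>n. X n \<subseteq> Field (cardSuc lam)"
    and "\<And>n. \<not> has_chromatic_number (X n) E (cardSuc lam)"
    and "S \<subseteq> A \<union> (\<Union>n. X n)"
  shows "\<not> has_chromatic_number S E (cardSuc lam)"
proof
  assume chromatic: "has_chromatic_number S E (cardSuc lam)"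
  define Y where "Y n = (case n of 0 \<Rightarrow> A | Suc m \<Rightarrow> X m)" for n
  have "S \<subseteq> Y 0 \<union> (\<Union>m. Y (Suc m))" using \<open>S \<subseteq> A \<union> (\<Union>n. X n)\<close> by (simp add: Y_def)
  then have "S \<subseteq> (\<Union>n. Y n)" by blast
  moreover have "\<exists>c :: 'a set \<Rightarrow> 'a set. proper_coloring (Y n) E c \<and> |c ` Y n| \<le>o lam" for n
  proof (cases n)
    case 0
    have "proper_coloring A E id" using irrefl unfolding proper_coloring_def by auto
    then show ?thesis unfolding 0 Y_def using \<open>|A| \<le>o lam\<close> by auto
  next
    case (Suc m)
    have "\<forall>x\<in>X m. \<not> E x x" using irrefl by blast
    then show ?thesis
      unfolding Suc Y_def
      using not_has_chromatic_number_cardSuc[OF assms(1) assms(5)[of m] _ assms(6)[of m]] by simp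
  qed
  ultimately obtain c :: "'a set \<Rightarrow> nat \<times> 'a set"
    where "proper_coloring S E c" and "|c ` S| \<le>o lam"
    using proper_coloring_countable_cover[OF assms(1,2)] by blast
  then have "cardSuc lam \<le>o lam"
    using has_chromatic_number_ordLeq_colours[OF chromatic] ordLeq_transitive by blast
  then show False using cardSuc_greater[OF assms(1)] not_ordLess_ordLeq by blast
qed

theorem lemma3:
  fixes lam :: "'a rel" and E :: "'a set \<Rightarrow> 'a set \<Rightarrow> bool"
  assumes "Card_order lam" and "\<not> finite (Field lam)"
    and "\<forall>x y. E x y \<longrightarrow> x \<in> Field (cardSuc lam) \<and> y \<in> Field (cardSuc lam)"
    and "\<forall>x y. E x y \<longrightarrow> E y x"
    and "\<forall>x. \<not> E x x"
    and "has_chromatic_number (Field (cardSuc lam)) E (cardSuc lam)"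
  shows "\<exists>f. (\<forall>\<alpha>\<in>Field (cardSuc lam). f \<alpha> \<in> Field (cardSuc lam)) \<and>
    (\<forall>C. club (cardSuc lam) C \<longrightarrow>
       has_chromatic_number (\<Union>\<alpha>\<in>C. ord_interval (cardSuc lam) \<alpha> (f \<alpha>)) E (cardSuc lam))"
proof (rule ccontr)
  let ?r = "cardSuc lam"
  let ?X = "\<lambda>f C. \<Union>\<alpha>\<in>C. ord_interval ?r \<alpha> (f \<alpha>)"
  interpret uncountable_cofinality ?r
    using assms(1,2) by (rule uncountable_cofinality_cardSuc)
  assume "\<not> ?thesis"
  then have "\<exists>C. club ?r C \<and> \<not> has_chromatic_number (?X f C) E ?r"
    if "\<forall>\<alpha>\<in>Field ?r. f \<alpha> \<in> Field ?r" for f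
    using that by blast
  then obtain g :: "nat \<Rightarrow> 'a set \<Rightarrow> 'a set" and C d0
    where not_chromatic: "\<forall>n. \<not> has_chromatic_number (?X (g n) (C n)) E ?r"
      and "d0 \<in> Field ?r" and cover: "Field ?r \<subseteq> underS d0 \<union> (\<Union>n. ?X (g n) (C n))"
    by (rule club_diagonal_interval_cover)
  have "|underS d0| \<le>o lam"
    using card_of_underS[OF cardSuc_Card_order[OF assms(1)] \<open>d0 \<in> Field ?r\<close>]
      cardSuc_ordLeq_ordLess[OF assms(1) card_of_Card_order] by blast
  moreover have "?X (g n) (C n) \<subseteq> Field ?r" for n unfolding ord_interval_def by blast
  ultimately have "\<not> has_chromatic_number (Field ?r) E ?r"
    using not_chromatic[rule_format] cover
    by (rule not_has_chromatic_number_cardSuc_cover[where E = E, OF assms(1,2,5)])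
  then show False using assms(6) by contradiction
qed

end
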